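(* Let $T$ be a tree with colour classes $A$ and $B$ such that $|A|\le |B|$ and $\delta(A)=\min\{d_T(x):x\in A\}\ge 2$. Then: (i) $\beta(T)=|A|$; (ii) $\min\{\beta(T'):T'\in\mathcal{H}(T)\}\ge |A|$; (iii) for every $m\ge 1$, the graph $K_{|A|-1}\vee K_m^c$ contains no member of $\mathcal{H}(T)$ as a subgraph.
   Context: $\beta(G)$ is the (vertex) covering number of $G$. $K_m^c$ is the empty graph on $m$ vertices and $\vee$ denotes the join. A vertex split on a vertex $v$ of $H$ replaces $v$ by an independent set of $d(v)$ new vertices, each adjacent to exactly one vertex of $N_H(v)$, distinct new vertices adjacent to distinct neighbours; a vertex split on $U\subseteq V(H)$ applies this to the vertices of $U$ one by one. The splitting family $\mathcal{H}(H)$ is the family of all graphs obtained from $H$ by a vertex split on some $U\subseteq V(H)$. *)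

theory Defs
  imports Main
begin

type_synonym 'a graph = "'a set \<times> 'a set set"

definition verts :: "'a graph \<Rightarrow> 'a set" where "verts G = fst G"
definition edges :: "'a graph \<Rightarrow> 'a set set" where "edges G = snd G"

definition simple_graph :: "'a graph \<Rightarrow> bool" where
  "simple_graph G \<longleftrightarrow> finite (verts G) \<and>
     (\<forall>e\<in>edges G. \<exists>x y. x \<in> verts G \<and> y \<in> verts G \<and> x \<noteq> y \<and> e = {x, y})"

definition adj :: "'a graph \<Rightarrow> 'a \<Rightarrow> 'a \<Rightarrow> bool" where
  "adj G x y \<longleftrightarrow> {x, y} \<in> edges G"

definition neighbours :: "'a graph \<Rightarrow> 'a \<Rightarrow> 'a set" where
  "neighbours G v = {u. adj G v u}"

definition degree :: "'a graph \<Rightarrow> 'a \<Rightarrow> nat" where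
  "degree G v = card (neighbours G v)"

definition connected :: "'a graph \<Rightarrow> bool" where
  "connected G \<longleftrightarrow> verts G \<noteq> {} \<and>
     (\<forall>x\<in>verts G. \<forall>y\<in>verts G. (x, y) \<in> {(u, w). adj G u w}\<^sup>*)"

definition is_cycle :: "'a graph \<Rightarrow> 'a list \<Rightarrow> bool" where
  "is_cycle G cs \<longleftrightarrow> length cs \<ge> 3 \<and> distinct cs \<and> set cs \<subseteq> verts G \<and>
     (\<forall>i < length cs - 1. adj G (cs ! i) (cs ! Suc i)) \<and> adj G (last cs) (hd cs)"

definition acyclic_graph :: "'a graph \<Rightarrow> bool" where
  "acyclic_graph G \<longleftrightarrow> \<not> (\<exists>cs. is_cycle G cs)"

definition tree :: "'a graph \<Rightarrow> bool" where
  "tree G \<longleftrightarrow> simple_graph G \<and> connected G \<and> acyclic_graph G"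

definition colour_classes :: "'a graph \<Rightarrow> 'a set \<Rightarrow> 'a set \<Rightarrow> bool" where
  "colour_classes G A B \<longleftrightarrow> A \<union> B = verts G \<and> A \<inter> B = {} \<and>
     (\<forall>e\<in>edges G. card (e \<inter> A) = 1 \<and> card (e \<inter> B) = 1)"

definition is_vertex_cover :: "'a graph \<Rightarrow> 'a set \<Rightarrow> bool" where
  "is_vertex_cover G S \<longleftrightarrow> S \<subseteq> verts G \<and> (\<forall>e\<in>edges G. e \<inter> S \<noteq> {})"

definition covering_number :: "'a graph \<Rightarrow> nat" where
  "covering_number G = Min {card S | S. is_vertex_cover G S}"

text \<open>Vertex split on a set U (result of splitting the vertices of U one by one,
  with concrete names for the vertices): an unsplit vertex v is named (v,v); the new
  vertex created when splitting v that is attached to (the image of) neighbour u is named (v,u).\<close>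
definition split_end :: "'a set \<Rightarrow> 'a \<Rightarrow> 'a \<Rightarrow> 'a \<times> 'a" where
  "split_end U x y = (if x \<in> U then (x, y) else (x, x))"

definition vertex_split :: "'a set \<Rightarrow> 'a graph \<Rightarrow> ('a \<times> 'a) graph" where
  "vertex_split U G =
     ({(v, v) | v. v \<in> verts G - U} \<union> {(v, u) | v u. v \<in> U \<and> adj G v u},
      {{split_end U x y, split_end U y x} | x y. {x, y} \<in> edges G})"

definition splitting_family :: "'a graph \<Rightarrow> ('a \<times> 'a) graph set" where
  "splitting_family H = {vertex_split U H | U. U \<subseteq> verts H}"

definition complete_graph :: "nat \<Rightarrow> nat graph" where
  "complete_graph n = ({0..<n}, {{i, j} | i j. i < n \<and> j < n \<and> i \<noteq> j})"

definition empty_graph :: "nat \<Rightarrow> nat graph" where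
  "empty_graph m = ({0..<m}, {})"

definition graph_join :: "'a graph \<Rightarrow> 'b graph \<Rightarrow> ('a + 'b) graph" where
  "graph_join G H =
     (Inl ` verts G \<union> Inr ` verts H,
      (\<lambda>e. Inl ` e) ` edges G \<union> (\<lambda>e. Inr ` e) ` edges H \<union>
      {{Inl x, Inr y} | x y. x \<in> verts G \<and> y \<in> verts H})"

definition contains_subgraph :: "'b graph \<Rightarrow> 'a graph \<Rightarrow> bool" where
  "contains_subgraph G H \<longleftrightarrow> (\<exists>f. inj_on f (verts H) \<and> f ` verts H \<subseteq> verts G \<and>
     (\<forall>e\<in>edges H. f ` e \<in> edges G))"

end

theory Submission
  imports Defs
begin

text \<open>The colour class A covers every edge. Conversely, let S be any vertex cover: every
  neighbour of a vertex of A - S lies in S - A. The edges at A - S span a forest with at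
  least 2|A - S| edges (each vertex of A has degree at least 2), and a forest has fewer
  edges than vertices, so A - S has more neighbours than elements and |S| \<ge> |A|.
  Projecting a vertex split back onto T maps vertex covers to vertex covers of no larger
  size, so splitting cannot lower the covering number. Finally, a copy of a split tree
  in K_{|A|-1} \<or> K_m^c would be covered by the |A| - 1 vertices of the clique.\<close>

lemma verts_pair [simp]: "verts (V, E) = V"
  by (simp add: verts_def)

lemma edges_pair [simp]: "edges (V, E) = E"
  by (simp add: edges_def)

lemma adj_sym: "adj G x y \<Longrightarrow> adj G y x"
  unfolding adj_def by (simp add: insert_commute)

lemma simple_graph_finite_verts: "simple_graph G \<Longrightarrow> finite (verts G)"
  by (simp add: simple_graph_def)

lemma simple_graph_edgeE:
  assumes "simple_graph G" "e \<in> edges G"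
  obtains x y where "x \<in> verts G" "y \<in> verts G" "x \<noteq> y" "e = {x, y}"
  using assms unfolding simple_graph_def by blast

lemma simple_graph_adjD:
  assumes "simple_graph G" "adj G x y"
  shows "x \<in> verts G" "y \<in> verts G" "x \<noteq> y"
  using assms unfolding simple_graph_def adj_def by (metis doubleton_eq_iff)+

lemma simple_graph_edges_subset: "simple_graph G \<Longrightarrow> e \<in> edges G \<Longrightarrow> e \<subseteq> verts G"
  by (metis simple_graph_edgeE empty_subsetI insert_subset)

lemma simple_graph_finite_edges: "simple_graph G \<Longrightarrow> finite (edges G)"
  by (meson Pow_iff finite_Pow_iff finite_subset simple_graph_edges_subset
      simple_graph_finite_verts subsetI)

lemma neighbours_subset_verts: "simple_graph G \<Longrightarrow> neighbours G v \<subseteq> verts G"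
  using simple_graph_adjD(2)[of G v] unfolding neighbours_def by blast

lemma finite_neighbours: "simple_graph G \<Longrightarrow> finite (neighbours G v)"
  using neighbours_subset_verts simple_graph_finite_verts by (rule finite_subset)

lemma edges_at_vertex:
  assumes "simple_graph G"
  shows "{e \<in> edges G. v \<in> e} = (\<lambda>u. {v, u}) ` neighbours G v"
proof -
  have "e \<in> (\<lambda>u. {v, u}) ` neighbours G v" if e: "e \<in> edges G" "v \<in> e" for e
  proof -
    obtain u where "e = {v, u}"
      using simple_graph_edgeE[OF assms e(1)] e(2) by (metis insertE insert_commute singletonD)
    then show ?thesis using e(1) by (auto simp: neighbours_def adj_def)
  qed
  then show ?thesis by (auto simp: neighbours_def adj_def)
qed

lemma acyclic_graph_subgraph:
  assumes "acyclic_graph G" "V \<subseteq> verts G" "E \<subseteq> edges G"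
  shows "acyclic_graph (V, E)"
  using assms unfolding acyclic_graph_def is_cycle_def adj_def by fastforce

lemma simple_graph_subgraph:
  assumes "simple_graph G" "V \<subseteq> verts G" "E \<subseteq> edges G" "\<forall>e\<in>E. e \<subseteq> V"
  shows "simple_graph (V, E)"
  unfolding simple_graph_def
proof (intro conjI ballI)
  show "finite (verts (V, E))"
    using finite_subset[OF assms(2) simple_graph_finite_verts[OF assms(1)]] by simp
  fix e assume "e \<in> edges (V, E)"
  then have "e \<in> edges G" "e \<subseteq> V"
    using assms(3,4) by auto
  then obtain x y where "x \<noteq> y" "e = {x, y}"
    by (elim simple_graph_edgeE[OF assms(1)])
  then show "\<exists>x y. x \<in> verts (V, E) \<and> y \<in> verts (V, E) \<and> x \<noteq> y \<and> e = {x, y}"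
    using \<open>e \<subseteq> V\<close> by auto
qed

definition is_path :: "'a graph \<Rightarrow> 'a list \<Rightarrow> bool" where
  "is_path G p \<longleftrightarrow> distinct p \<and> set p \<subseteq> verts G \<and>
     (\<forall>i < length p - 1. adj G (p ! i) (p ! Suc i))"

lemma is_path_length_le: "is_path G p \<Longrightarrow> finite (verts G) \<Longrightarrow> length p \<le> card (verts G)"
  unfolding is_path_def by (metis card_mono distinct_card)

lemma longest_path_exists:
  assumes "finite (verts G)" "v \<in> verts G"
  obtains p where "is_path G p" "p \<noteq> []" "\<forall>q. is_path G q \<longrightarrow> length q \<le> length p"
proof -
  define L where "L = length ` {p. is_path G p}"
  have "L \<subseteq> {..card (verts G)}"
    using is_path_length_le[OF _ assms(1)] unfolding L_def by blast
  then have fin: "finite L"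
    by (rule finite_subset) simp
  have "[v] \<in> {p. is_path G p}"
    using assms(2) unfolding is_path_def by simp
  then have "1 \<in> L"
    unfolding L_def by force
  then have "Max L \<in> L"
    using Max_in[OF fin] by blast
  then obtain p where p: "is_path G p" "length p = Max L"
    unfolding L_def by (rule imageE) simp
  show thesis
  proof (rule that)
    show "is_path G p" by fact
    show "p \<noteq> []"
      using p(2) Max_ge[OF fin \<open>1 \<in> L\<close>] by auto
    show "\<forall>q. is_path G q \<longrightarrow> length q \<le> length p"
      using p(2) Max_ge[OF fin] unfolding L_def by simp
  qed
qed

lemma is_path_Cons:
  assumes "is_path G p" "p \<noteq> []" "u \<in> verts G" "u \<notin> set p" "adj G u (hd p)"
  shows "is_path G (u # p)"
  unfolding is_path_def
proof (intro conjI allI impI)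
  show "distinct (u # p)" "set (u # p) \<subseteq> verts G"
    using assms by (auto simp: is_path_def)
  fix i assume "i < length (u # p) - 1"
  then show "adj G ((u # p) ! i) ((u # p) ! Suc i)"
    using assms by (cases i) (auto simp: is_path_def hd_conv_nth)
qed

lemma is_cycle_take_path:
  assumes "is_path G p" "2 \<le> i" "i < length p" "adj G (p ! i) (hd p)"
  shows "is_cycle G (take (Suc i) p)"
  unfolding is_cycle_def
proof (intro conjI allI impI)
  show "3 \<le> length (take (Suc i) p)"
    using assms(2,3) by simp
  show "distinct (take (Suc i) p)" "set (take (Suc i) p) \<subseteq> verts G"
    using assms(1) set_take_subset[of "Suc i" p] by (auto simp: is_path_def)
  show "adj G (take (Suc i) p ! j) (take (Suc i) p ! Suc j)"
    if "j < length (take (Suc i) p) - 1" for j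
    using assms(1,3) that by (simp add: is_path_def)
  have "last (take (Suc i) p) = p ! i"
    using assms(3) by (simp add: take_Suc_conv_app_nth)
  moreover have "hd (take (Suc i) p) = hd p"
    using assms(3) by (cases p) auto
  ultimately show "adj G (last (take (Suc i) p)) (hd (take (Suc i) p))"
    using assms(4) by simp
qed

text \<open>The head of a longest path has all its neighbours on the path; two of them
  give a back edge closing a cycle.\<close>
lemma min_degree_two_not_acyclic:
  assumes G: "simple_graph G" "verts G \<noteq> {}" and deg: "\<forall>v\<in>verts G. 2 \<le> degree G v"
  shows "\<not> acyclic_graph G"
proof -
  obtain v where v: "v \<in> verts G" using G(2) by blast
  obtain p where p: "is_path G p" "p \<noteq> []"
    and longest: "\<forall>q. is_path G q \<longrightarrow> length q \<le> length p"
    by (rule longest_path_exists[OF simple_graph_finite_verts[OF G(1)] v])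
  have "hd p \<in> verts G" using p by (auto simp: is_path_def)
  have on_path: "neighbours G (hd p) \<subseteq> set p"
  proof
    fix u assume u: "u \<in> neighbours G (hd p)"
    show "u \<in> set p"
    proof (rule ccontr)
      assume "u \<notin> set p"
      moreover have "adj G u (hd p)" "u \<in> verts G"
        using u simple_graph_adjD(2)[OF G(1)] by (auto simp: neighbours_def intro: adj_sym)
      ultimately have "is_path G (u # p)"
        using p by (intro is_path_Cons)
      then show False using longest by fastforce
    qed
  qed
  have "2 \<le> card (neighbours G (hd p))"
    using deg \<open>hd p \<in> verts G\<close> by (simp add: degree_def)
  then obtain u where u: "u \<in> neighbours G (hd p)" "u \<noteq> p ! 1"
    using finite_neighbours[OF G(1)]
    by (metis Suc_1 Suc_leI card_le_Suc0_iff_eq le_trans less_one not_less_eq_eq)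
  then obtain i where i: "i < length p" "p ! i = u"
    using on_path by (meson in_set_conv_nth subsetD)
  have "adj G (hd p) u"
    using u(1) by (simp add: neighbours_def)
  then have "u \<noteq> hd p"
    using simple_graph_adjD(3)[OF G(1)] by metis
  then have "2 \<le> i"
    using i u(2) p(2) by (cases i; cases "i - 1") (auto simp: hd_conv_nth)
  then have "is_cycle G (take (Suc i) p)"
    using i p(1) adj_sym[OF \<open>adj G (hd p) u\<close>] by (intro is_cycle_take_path) auto
  then show ?thesis unfolding acyclic_graph_def by blast
qed

text \<open>Induction on the number of vertices: by the previous lemma some vertex has at most
  one neighbour, and deleting it removes at most one edge.\<close>
lemma acyclic_card_edges_less:
  assumes "simple_graph G" "acyclic_graph G" "verts G \<noteq> {}"
  shows "card (edges G) < card (verts G)"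
  using assms
proof (induction "card (verts G)" arbitrary: G rule: less_induct)
  case less
  have fin: "finite (verts G)" using less.prems(1) by (rule simple_graph_finite_verts)
  obtain v where v: "v \<in> verts G" "degree G v \<le> 1"
    using min_degree_two_not_acyclic[OF less.prems(1,3)] less.prems(2) not_less_eq_eq
    by (metis Suc_1)
  define G' where "G' = (verts G - {v}, {e \<in> edges G. v \<notin> e})"
  have "card {e \<in> edges G. v \<in> e} \<le> degree G v"
    unfolding edges_at_vertex[OF less.prems(1)] degree_def
    using finite_neighbours[OF less.prems(1)] by (rule card_image_le)
  then have removed: "card {e \<in> edges G. v \<in> e} \<le> 1"
    using v(2) by linarith
  have split: "card (edges G) = card (edges G') + card {e \<in> edges G. v \<in> e}"
  proof -
    have "edges G = edges G' \<union> {e \<in> edges G. v \<in> e}" "edges G' \<inter> {e \<in> edges G. v \<in> e} = {}"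
      "finite (edges G')" "finite {e \<in> edges G. v \<in> e}"
      using simple_graph_finite_edges[OF less.prems(1)] unfolding G'_def by auto
    then show ?thesis by (metis card_Un_disjoint)
  qed
  show ?case
  proof (cases "verts G' = {}")
    case True
    then have "verts G = {v}"
      using v(1) unfolding G'_def by auto
    have "e \<notin> edges G" for e
    proof
      assume "e \<in> edges G"
      then obtain x y where "x \<in> verts G" "y \<in> verts G" "x \<noteq> y"
        by (rule simple_graph_edgeE[OF less.prems(1)])
      with \<open>verts G = {v}\<close> show False by simp
    qed
    then have "edges G = {}"
      by blast
    then show ?thesis using \<open>verts G = {v}\<close> by simp
  next
    case False
    have "simple_graph G'"
      unfolding G'_def using simple_graph_edges_subset[OF less.prems(1)]
      by (intro simple_graph_subgraph[OF less.prems(1)]) auto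
    moreover have "acyclic_graph G'"
      unfolding G'_def by (rule acyclic_graph_subgraph[OF less.prems(2)]) auto
    moreover have card_G: "card (verts G) = Suc (card (verts G'))"
      unfolding G'_def using card_Suc_Diff1[OF fin v(1)] by simp
    ultimately have "card (edges G') < card (verts G')"
      using less.hyps False by simp
    then show ?thesis using split removed card_G by linarith
  qed
qed

text \<open>The edges at an independent set I span a forest on I and its neighbourhood N,
  with at least 2|I| edges; a forest has fewer edges than vertices, so 2|I| < |I| + |N|.\<close>
lemma acyclic_independent_set_expands:
  assumes G: "simple_graph G" "acyclic_graph G"
    and I: "I \<subseteq> verts G" "I \<noteq> {}" "\<forall>x\<in>I. \<forall>y\<in>I. \<not> adj G x y"
    and deg: "\<forall>x\<in>I. 2 \<le> degree G x"
  shows "card I < card (\<Union>x\<in>I. neighbours G x)"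
proof -
  define N where "N = (\<Union>x\<in>I. neighbours G x)"
  define E where "E = {e \<in> edges G. e \<inter> I \<noteq> {}}"
  have finI: "finite I" "finite N"
    using I(1) G(1) neighbours_subset_verts unfolding N_def
    by (meson UN_least finite_subset simple_graph_finite_verts)+
  have disj: "I \<inter> N = {}"
    using I(3) unfolding N_def neighbours_def by blast
  have E_verts: "e \<subseteq> I \<union> N" if "e \<in> E" for e
  proof -
    have e: "e \<in> edges G" "e \<inter> I \<noteq> {}"
      using that unfolding E_def by auto
    obtain x y where "e = {x, y}"
      using simple_graph_edgeE[OF G(1) e(1)] by metis
    moreover have "adj G x y" "adj G y x"
      using e(1) \<open>e = {x, y}\<close> by (simp_all add: adj_def insert_commute)
    ultimately show ?thesis
      using e(2) unfolding N_def neighbours_def by blast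
  qed
  have "simple_graph (I \<union> N, E)"
    using G(1) I(1) neighbours_subset_verts[OF G(1)] E_verts unfolding N_def E_def
    by (intro simple_graph_subgraph) auto
  moreover have "acyclic_graph (I \<union> N, E)"
    using G(2) I(1) neighbours_subset_verts[OF G(1)] unfolding N_def E_def
    by (intro acyclic_graph_subgraph) auto
  ultimately have "card E < card I + card N"
    using acyclic_card_edges_less I(2) card_Un_disjoint[OF finI disj] by fastforce
  moreover have "2 * card I \<le> card E"
  proof -
    define P where "P = Sigma I (neighbours G)"
    have "2 * card I \<le> (\<Sum>x\<in>I. degree G x)"
      using deg sum_mono[of I "\<lambda>_. 2 :: nat" "degree G"] by (simp add: mult.commute)
    also have "\<dots> = card P"
      unfolding P_def degree_def using finI(1) finite_neighbours[OF G(1)] by simp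
    also have "\<dots> = card ((\<lambda>(x, u). {x, u}) ` P)"
    proof (rule card_image[symmetric], rule inj_onI, clarify)
      fix x u y w assume "(x, u) \<in> P" "(y, w) \<in> P" "{x, u} = {y, w}"
      then show "x = y \<and> u = w"
        using I(3) unfolding P_def neighbours_def by (metis SigmaE2 doubleton_eq_iff mem_Collect_eq)
    qed
    also have "\<dots> \<le> card E"
      using simple_graph_finite_edges[OF G(1)] unfolding P_def E_def neighbours_def adj_def
      by (intro card_mono) auto
    finally show ?thesis .
  qed
  ultimately show ?thesis
    unfolding N_def by linarith
qed

lemma finite_vertex_cover_cards:
  assumes "finite (verts G)"
  shows "finite {card S | S. is_vertex_cover G S}"
proof (rule finite_subset)
  show "{card S | S. is_vertex_cover G S} \<subseteq> card ` Pow (verts G)"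
    unfolding is_vertex_cover_def by auto
qed (use assms in simp)

lemma covering_number_le:
  assumes "finite (verts G)" "is_vertex_cover G S"
  shows "covering_number G \<le> card S"
  unfolding covering_number_def using assms(2) finite_vertex_cover_cards[OF assms(1)]
  by (intro Min_le) auto

lemma minimum_vertex_cover_exists:
  assumes "finite (verts G)" "is_vertex_cover G S0"
  obtains S where "is_vertex_cover G S" "card S = covering_number G"
proof -
  have "covering_number G \<in> {card S | S. is_vertex_cover G S}"
    unfolding covering_number_def using assms(2) finite_vertex_cover_cards[OF assms(1)]
    by (intro Min_in) auto
  then show thesis using that by auto
qed

lemma simple_graph_vertex_cover_verts:
  assumes "simple_graph G"
  shows "is_vertex_cover G (verts G)"
  unfolding is_vertex_cover_def
proof (intro conjI ballI subset_refl)
  fix e assume "e \<in> edges G"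
  then obtain x y where "x \<in> verts G" "e = {x, y}"
    by (rule simple_graph_edgeE[OF assms])
  then show "e \<inter> verts G \<noteq> {}" by blast
qed

lemma colour_class_vertex_cover:
  assumes "colour_classes G A B"
  shows "is_vertex_cover G A"
  unfolding is_vertex_cover_def
proof (intro conjI ballI)
  show "A \<subseteq> verts G"
    using assms unfolding colour_classes_def by blast
  fix e assume "e \<in> edges G"
  then have "card (e \<inter> A) = 1"
    using assms unfolding colour_classes_def by blast
  then show "e \<inter> A \<noteq> {}"
    by (metis card.empty zero_neq_one)
qed

lemma colour_class_independent:
  assumes "simple_graph G" "colour_classes G A B" "x \<in> A" "y \<in> A"
  shows "\<not> adj G x y"
proof
  assume xy: "adj G x y"
  then have "card ({x, y} \<inter> A) = 1"
    using assms(2) unfolding colour_classes_def adj_def by blast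
  moreover have "x \<noteq> y"
    using simple_graph_adjD(3)[OF assms(1) xy] .
  ultimately show False using assms(3,4) by simp
qed

text \<open>A cover S contains all neighbours of A - S, and these outnumber A - S.\<close>
lemma covering_number_colour_class:
  assumes G: "simple_graph G" "acyclic_graph G" and AB: "colour_classes G A B"
    and deg: "\<forall>x\<in>A. 2 \<le> degree G x"
  shows "covering_number G = card A"
proof (rule antisym)
  have fin: "finite (verts G)" using G(1) by (rule simple_graph_finite_verts)
  have A: "A \<subseteq> verts G" "is_vertex_cover G A"
    using AB colour_class_vertex_cover[OF AB] unfolding colour_classes_def by blast+
  show "covering_number G \<le> card A"
    using covering_number_le[OF fin A(2)] .
  obtain S where S: "is_vertex_cover G S" "card S = covering_number G"
    using minimum_vertex_cover_exists[OF fin A(2)] .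
  have finS: "finite S" "finite A"
    using finite_subset[OF _ fin] S(1) A(1) unfolding is_vertex_cover_def by blast+
  have indep: "\<forall>x\<in>A - S. \<forall>y\<in>A - S. \<not> adj G x y"
    using colour_class_independent[OF G(1) AB] by blast
  define N where "N = (\<Union>x\<in>A - S. neighbours G x)"
  have "N \<subseteq> S"
  proof
    fix u assume "u \<in> N"
    then obtain x where "x \<in> A" "x \<notin> S" "{x, u} \<in> edges G"
      unfolding N_def neighbours_def adj_def by blast
    moreover have "{x, u} \<inter> S \<noteq> {}"
      using S(1) \<open>{x, u} \<in> edges G\<close> unfolding is_vertex_cover_def by blast
    ultimately show "u \<in> S" by blast
  qed
  have "N \<inter> A = {}"
    using colour_class_independent[OF G(1) AB] unfolding N_def neighbours_def by blast
  have "card (A - S) \<le> card N"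
  proof (cases "A - S = {}")
    case False
    have "card (A - S) < card N"
      unfolding N_def using A(1) False indep deg
      by (intro acyclic_independent_set_expands[OF G]) auto
    then show ?thesis by simp
  qed (metis card.empty zero_le)
  then have "card A \<le> card (A \<inter> S) + card N"
    using card_Int_Diff[OF finS(2), of S] by linarith
  also have "\<dots> = card ((A \<inter> S) \<union> N)"
    using \<open>N \<inter> A = {}\<close> finite_subset[OF \<open>N \<subseteq> S\<close> finS(1)] finS
    by (intro card_Un_disjoint[symmetric]) auto
  also have "\<dots> \<le> card S"
    using \<open>N \<subseteq> S\<close> finS by (intro card_mono) auto
  finally show "card A \<le> covering_number G" using S(2) by simp
qed

lemma fst_split_end [simp]: "fst (split_end U x y) = x"
  by (simp add: split_end_def)

lemma vertex_split_edgeE: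
  assumes "e \<in> edges (vertex_split U G)"
  obtains x y where "{x, y} \<in> edges G" "e = {split_end U x y, split_end U y x}"
  using assms unfolding vertex_split_def by auto

lemma fst_vertex_split_verts:
  assumes "simple_graph G"
  shows "fst ` verts (vertex_split U G) \<subseteq> verts G"
  using simple_graph_adjD(1)[OF assms] unfolding vertex_split_def by auto

lemma split_end_in_vertex_split:
  assumes "simple_graph G" "{x, y} \<in> edges G"
  shows "split_end U x y \<in> verts (vertex_split U G)"
proof -
  have "x \<in> verts G" "adj G x y"
    using assms simple_graph_adjD(1)[OF assms(1)] by (auto simp: adj_def)
  then show ?thesis
    unfolding split_end_def vertex_split_def by auto
qed

lemma simple_graph_vertex_split:
  assumes "simple_graph G"
  shows "simple_graph (vertex_split U G)"
  unfolding simple_graph_def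
proof (intro conjI ballI)
  have "verts (vertex_split U G) \<subseteq> verts G \<times> verts G"
    using simple_graph_adjD[OF assms] unfolding vertex_split_def by auto
  then show "finite (verts (vertex_split U G))"
    using simple_graph_finite_verts[OF assms] by (meson finite_SigmaI finite_subset)
  fix e assume "e \<in> edges (vertex_split U G)"
  then obtain x y where xy: "{x, y} \<in> edges G" "e = {split_end U x y, split_end U y x}"
    by (rule vertex_split_edgeE)
  moreover have "x \<noteq> y"
    using xy(1) simple_graph_adjD(3)[OF assms] by (auto simp: adj_def)
  then have "split_end U x y \<noteq> split_end U y x"
    by (metis fst_split_end)
  moreover have "{y, x} \<in> edges G"
    using xy(1) by (simp add: insert_commute)
  ultimately show "\<exists>a b. a \<in> verts (vertex_split U G) \<and> b \<in> verts (vertex_split U G) \<and>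
      a \<noteq> b \<and> e = {a, b}"
    using split_end_in_vertex_split[OF assms] by blast
qed

lemma vertex_cover_fst_vertex_split:
  assumes "simple_graph G" "is_vertex_cover (vertex_split U G) S"
  shows "is_vertex_cover G (fst ` S)"
  unfolding is_vertex_cover_def
proof (intro conjI ballI)
  show "fst ` S \<subseteq> verts G"
    using assms(2) fst_vertex_split_verts[OF assms(1), of U] unfolding is_vertex_cover_def by blast
  fix e assume e: "e \<in> edges G"
  then obtain x y where xy: "e = {x, y}"
    by (rule simple_graph_edgeE[OF assms(1)])
  have "{split_end U x y, split_end U y x} \<in> edges (vertex_split U G)"
    using e unfolding xy vertex_split_def by auto
  then obtain z where "z \<in> {split_end U x y, split_end U y x}" "z \<in> S"
    using assms(2) unfolding is_vertex_cover_def by blast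
  then have "fst z \<in> e \<inter> fst ` S"
    unfolding xy by auto
  then show "e \<inter> fst ` S \<noteq> {}" by blast
qed

lemma covering_number_le_vertex_split:
  assumes "simple_graph G"
  shows "covering_number G \<le> covering_number (vertex_split U G)"
proof -
  have split: "simple_graph (vertex_split U G)"
    using assms by (rule simple_graph_vertex_split)
  have fin: "finite (verts (vertex_split U G))"
    using split by (rule simple_graph_finite_verts)
  obtain S where S: "is_vertex_cover (vertex_split U G) S"
      "card S = covering_number (vertex_split U G)"
    by (rule minimum_vertex_cover_exists[OF fin simple_graph_vertex_cover_verts[OF split]])
  have "finite S"
    using S(1) finite_subset[OF _ fin] unfolding is_vertex_cover_def by blast
  have "covering_number G \<le> card (fst ` S)"
    using covering_number_le[OF simple_graph_finite_verts[OF assms]]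
      vertex_cover_fst_vertex_split[OF assms S(1)] .
  also have "\<dots> \<le> card S"
    using \<open>finite S\<close> by (rule card_image_le)
  finally show ?thesis using S(2) by simp
qed

lemma finite_splitting_family:
  assumes "finite (verts H)"
  shows "finite (splitting_family H)"
proof -
  have "splitting_family H = (\<lambda>U. vertex_split U H) ` Pow (verts H)"
    unfolding splitting_family_def by blast
  then show ?thesis using assms by simp
qed

text \<open>The preimage of a vertex cover of G under an embedding of H is a vertex cover of H.\<close>
lemma covering_number_le_if_contains_subgraph:
  assumes "simple_graph H" "contains_subgraph G H" "is_vertex_cover G S" "finite S"
  shows "covering_number H \<le> card S"
proof -
  obtain f where f: "inj_on f (verts H)" "\<forall>e\<in>edges H. f ` e \<in> edges G"
    using assms(2) unfolding contains_subgraph_def by blast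
  define S' where "S' = {v \<in> verts H. f v \<in> S}"
  have "is_vertex_cover H S'"
    unfolding is_vertex_cover_def
  proof (intro conjI ballI)
    show "S' \<subseteq> verts H" unfolding S'_def by blast
    fix e assume e: "e \<in> edges H"
    then have "f ` e \<inter> S \<noteq> {}"
      using f(2) assms(3) unfolding is_vertex_cover_def by blast
    then show "e \<inter> S' \<noteq> {}"
      using simple_graph_edges_subset[OF assms(1) e] unfolding S'_def by blast
  qed
  then have "covering_number H \<le> card S'"
    by (rule covering_number_le[OF simple_graph_finite_verts[OF assms(1)]])
  also have "\<dots> \<le> card S"
  proof (rule card_inj_on_le)
    show "inj_on f S'"
      using f(1) unfolding S'_def by (rule inj_on_subset) blast
  qed (use assms(4) in \<open>auto simp: S'_def\<close>)
  finally show ?thesis .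
qed

lemma vertex_cover_join_complete_empty:
  "is_vertex_cover (graph_join (complete_graph n) (empty_graph m)) (Inl ` {0..<n})"
  unfolding is_vertex_cover_def
proof (intro conjI ballI)
  show "Inl ` {0..<n} \<subseteq> verts (graph_join (complete_graph n) (empty_graph m))"
    by (simp add: graph_join_def complete_graph_def)
  fix e assume "e \<in> edges (graph_join (complete_graph n) (empty_graph m))"
  then have "e \<in> (\<lambda>e. Inl ` e) ` {{i, j} | i j. i < n \<and> j < n \<and> i \<noteq> j} \<or>
      e \<in> {{Inl i, Inr j} | i j. i \<in> {0..<n} \<and> j \<in> {0..<m}}"
    by (simp add: graph_join_def complete_graph_def empty_graph_def)
  then obtain i where "i < n" "Inl i \<in> e"
    by auto
  then show "e \<inter> Inl ` {0..<n} \<noteq> {}"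
    by (metis IntI atLeastLessThan_iff empty_iff image_eqI zero_le)
qed

theorem lemma2p4:
  fixes T :: "'a graph" and A B :: "'a set"
  assumes "tree T"
    and "colour_classes T A B"
    and "card A \<le> card B"
    and "A \<noteq> {}"
    and "\<forall>x\<in>A. degree T x \<ge> 2"
  shows "covering_number T = card A
    \<and> Min (covering_number ` splitting_family T) \<ge> card A
    \<and> (\<forall>m\<ge>1. \<forall>T'\<in>splitting_family T.
           \<not> contains_subgraph (graph_join (complete_graph (card A - 1)) (empty_graph m)) T')"
proof -
  have T: "simple_graph T" "acyclic_graph T"
    using assms(1) unfolding tree_def by blast+
  have cov: "covering_number T = card A"
    using covering_number_colour_class[OF T assms(2,5)] .
  have split: "simple_graph T'" "card A \<le> covering_number T'" if "T' \<in> splitting_family T" for T'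
    using that simple_graph_vertex_split[OF T(1)] covering_number_le_vertex_split[OF T(1)] cov
    unfolding splitting_family_def by auto
  have "finite (splitting_family T)" "vertex_split {} T \<in> splitting_family T"
    using finite_splitting_family[OF simple_graph_finite_verts[OF T(1)]]
    unfolding splitting_family_def by auto
  then have "card A \<le> Min (covering_number ` splitting_family T)"
    using split(2) by (subst Min_ge_iff) auto
  moreover have "\<not> contains_subgraph (graph_join (complete_graph (card A - 1)) (empty_graph m)) T'"
    if "T' \<in> splitting_family T" for m T'
  proof
    assume "contains_subgraph (graph_join (complete_graph (card A - 1)) (empty_graph m)) T'"
    then have "covering_number T' \<le> card (Inl ` {0..<card A - 1} :: (nat + nat) set)"
      using covering_number_le_if_contains_subgraph[OF split(1)[OF that] _
          vertex_cover_join_complete_empty] by blast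
    moreover have "0 < card A"
      using assms(2,4) finite_subset[OF _ simple_graph_finite_verts[OF T(1)]]
      unfolding colour_classes_def by (metis Un_upper1 card_gt_0_iff)
    ultimately show False
      using split(2)[OF that] by (simp add: card_image)
  qed
  ultimately show ?thesis
    using cov by blast
qed

end
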